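(* For every integer $n\geq 1$, $$\sum_{k=1}^{n}\bar B_{2k}\bar B_{2n-2k}=\frac{1}{n+1}\sum_{k=1}^{n}B_{2k}\bar B_{2n-2k}\binom{2n+2}{2k+2}+2n\bar B_{2n}.$$
   Context: $B_n$ denotes the Bernoulli numbers, defined by $\frac{x}{e^x-1}=\sum_{n\ge 0}B_n\frac{x^n}{n!}$ (so $B_0=1$). $\bar B_n:=\frac{1-2^{n-1}}{2^{n-1}}B_n$ (so $\bar B_0=1$). *)

theory Defs
  imports Complex_Main
begin

text \<open>Bernoulli numbers with the convention x/(e^x-1) = sum B_n x^n/n!, so B_0 = 1, B_1 = -1/2.
  Defined by the standard recurrence B_0 = 1, B_n = -(1/(n+1)) * sum_{k<n} (n+1 choose k) B_k.\<close>
fun bernoulli :: "nat \<Rightarrow> real" where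
  "bernoulli n = (if n = 0 then 1 else
     - (\<Sum>k<n. (if k < n then real (Suc n choose k) * bernoulli k else 0)) / real (Suc n))"

declare bernoulli.simps [simp del]

definition bernoulli_bar :: "nat \<Rightarrow> real" where
  "bernoulli_bar n = (1 - 2 ^ n / 2) / (2 ^ n / 2) * bernoulli n"

end

theory Submission
  imports Defs "HOL-Computational_Algebra.Formal_Power_Series"
begin

(* Let C(x) = sum_n Bbar_n x^n/n! = x e^(x/2)/(e^x - 1), which is even, and B(x) = x/(e^x - 1).
   Write conv(f, g)(x) for the integral from 0 to x of f(t) g(x - t) dt: the unweighted sum over i of
   Bbar_i Bbar_(2n-i) is (2n+1)! times the coefficient of x^(2n+1) in conv(C, C).
   Since conv(f e^(cx), g e^(cx)) = e^(cx) conv(f, g) and C e^x = C + x e^(x/2), one gets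
   (e^x - 1) conv(C, C) = e^(x/2) R with R = 2 conv(B, x) + conv(x, x); multiplying by x and using
   C (e^x - 1) = x e^(x/2) yields x conv(C, C) = R C. Comparing coefficients of x^(2n+2), where only
   even indices contribute and the even coefficients of R are 2 B_(2k)/(2k+2)!, gives the identity
   with the terms k = 0 included. *)

unbundle fps_syntax

lemma sum_atMost_even_terms:
  fixes g :: "nat \<Rightarrow> 'a::comm_monoid_add"
  assumes "\<And>i. odd i \<Longrightarrow> i < 2 * n \<Longrightarrow> g i = 0"
  shows "(\<Sum>i\<le>2 * n. g i) = (\<Sum>k\<le>n. g (2 * k))"
  using assms
proof (induction n)
  case (Suc n)
  have "(\<Sum>i\<le>2 * Suc n. g i) = (\<Sum>i\<le>2 * n. g i) + g (Suc (2 * n)) + g (2 * Suc n)"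
    by (simp add: add.assoc)
  with Suc show ?case
    by simp
qed simp

lemma choose_two_even: "(2 * n + 2) choose 2 = (n + 1) * (2 * n + 1)"
proof -
  have "(2 * n + 2) * (2 * n + 2 - 1) = 2 * ((n + 1) * (2 * n + 1))"
    by simp
  then show ?thesis
    unfolding choose_two by presburger
qed

lemma binomial_even_over_fact:
  assumes "k \<le> n"
  shows "2 / (fact (2 * k + 2) * fact (2 * n - 2 * k)) =
         real ((2 * n + 2) choose (2 * k + 2)) / (real (n + 1) * fact (2 * n + 1))"
proof -
  define D where "D = (fact (2 * k + 2) * fact (2 * n - 2 * k) :: real)"
  define G where "G = real (n + 1) * fact (2 * n + 1)"
  have "real ((2 * n + 2) choose (2 * k + 2)) = fact (2 * n + 2) / D"
    unfolding D_def using assms by (subst binomial_fact) auto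
  also have "(fact (2 * n + 2) :: real) = 2 * G"
    by (simp add: G_def fact_Suc algebra_simps)
  finally have choose: "real ((2 * n + 2) choose (2 * k + 2)) = 2 * G / D" .
  have "D \<noteq> 0" "G \<noteq> 0"
    by (simp_all add: D_def G_def)
  then show ?thesis
    unfolding D_def[symmetric] G_def[symmetric] choose by (simp add: field_simps)
qed

definition egf :: "(nat \<Rightarrow> 'a::field_char_0) \<Rightarrow> 'a fps" where
  "egf a = Abs_fps (\<lambda>n. a n / fact n)"

lemma egf_nth [simp]: "egf a $ n = a n / fact n"
  by (simp add: egf_def)

lemma egf_mult_nth: "(egf a * egf b) $ n = (\<Sum>i\<le>n. of_nat (n choose i) * a i * b (n - i)) / fact n"
  unfolding fps_mult_nth atLeast0AtMost sum_divide_distrib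
  by (intro sum.cong refl) (simp add: binomial_fact field_simps)

lemma fps_exp_eq_egf: "fps_exp c = egf (\<lambda>n. c ^ n)"
  by (rule fps_ext) simp

(* The series of the integral from 0 to x of f(t) g(x - t) dt; its coefficients come from the
   Beta integral: the integral of t^i (x - t)^j is i! j! x^(i+j+1) / (i+j+1)!. *)
definition fps_conv :: "'a::field_char_0 fps \<Rightarrow> 'a fps \<Rightarrow> 'a fps" where
  "fps_conv f g = Abs_fps (\<lambda>n. case n of 0 \<Rightarrow> 0 | Suc m \<Rightarrow>
     (\<Sum>i\<le>m. fact i * fact (m - i) * f $ i * g $ (m - i)) / fact (Suc m))"

lemma fps_conv_nth_0 [simp]: "fps_conv f g $ 0 = 0"
  by (simp add: fps_conv_def)

lemma fps_conv_nth_Suc: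
  "fps_conv f g $ Suc m = (\<Sum>i\<le>m. fact i * fact (m - i) * f $ i * g $ (m - i)) / fact (Suc m)"
  by (simp add: fps_conv_def)

lemma fps_conv_egf_nth_Suc:
  "fps_conv (egf a) (egf b) $ Suc m = (\<Sum>i\<le>m. a i * b (m - i)) / fact (Suc m)"
  unfolding fps_conv_nth_Suc by (simp add: field_simps)

lemma fps_conv_commute: "fps_conv f g = fps_conv g f"
proof (rule fps_ext)
  fix n
  show "fps_conv f g $ n = fps_conv g f $ n"
  proof (cases n)
    case (Suc m)
    have "(\<Sum>i\<le>m. fact i * fact (m - i) * f $ i * g $ (m - i)) =
          (\<Sum>i\<le>m. fact (m - i) * fact (m - (m - i)) * f $ (m - i) * g $ (m - (m - i)))"
      using sum.atLeastAtMost_rev[of "\<lambda>i. fact i * fact (m - i) * f $ i * g $ (m - i)" 0 m]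
      by (simp add: atLeast0AtMost)
    also have "\<dots> = (\<Sum>i\<le>m. fact i * fact (m - i) * g $ i * f $ (m - i))"
      by (intro sum.cong refl) (simp add: mult_ac)
    finally show ?thesis by (simp add: Suc fps_conv_nth_Suc)
  qed simp
qed

lemma fps_conv_add_left: "fps_conv (f + g) h = fps_conv f h + fps_conv g h"
  by (rule fps_ext) (simp add: fps_conv_def algebra_simps sum.distrib add_divide_distrib split: nat.split)

lemma fps_conv_add_right: "fps_conv f (g + h) = fps_conv f g + fps_conv f h"
  by (simp add: fps_conv_commute[of f] fps_conv_add_left)

lemma fps_conv_const_mult_right: "fps_conv f (fps_const c * g) = fps_const c * fps_conv f g"
  by (rule fps_ext) (simp add: fps_conv_def algebra_simps sum_distrib_left split: nat.split)

lemma fps_conv_fps_X_nth: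
  "fps_conv f fps_X $ Suc (Suc m) = f $ m / (of_nat (m + 1) * of_nat (m + 2))"
proof -
  have "(\<Sum>i\<le>Suc m. fact i * fact (Suc m - i) * f $ i * fps_X $ (Suc m - i)) =
        (\<Sum>i\<le>Suc m. if i = m then fact m * f $ m else 0)"
    by (intro sum.cong) (auto simp: fps_X_nth Suc_diff_le)
  moreover have "(fact (Suc (Suc m)) :: 'a) = fact m * (of_nat (m + 1) * of_nat (m + 2))"
    by (simp add: fact_Suc algebra_simps)
  ultimately show ?thesis
    by (simp add: fps_conv_nth_Suc)
qed

lemma fps_conv_egf_fps_X_nth: "fps_conv (egf a) fps_X $ Suc (Suc m) = a m / fact (m + 2)"
  by (simp add: fps_conv_fps_X_nth fact_Suc field_simps)

lemma fps_deriv_fps_conv: "fps_deriv (fps_conv f g) = fps_const (g $ 0) * f + fps_conv f (fps_deriv g)"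
proof (rule fps_ext)
  fix n
  have "fps_deriv (fps_conv f g) $ n = (\<Sum>i\<le>n. fact i * fact (n - i) * f $ i * g $ (n - i)) / fact n"
    by (simp add: fps_conv_nth_Suc fact_Suc del: of_nat_Suc)
  also have "(\<Sum>i\<le>n. fact i * fact (n - i) * f $ i * g $ (n - i)) =
        (\<Sum>i<n. fact i * fact (n - i) * f $ i * g $ (n - i)) + fact n * (g $ 0 * f $ n)"
    by (simp add: lessThan_Suc_atMost[symmetric])
  also have "(\<Sum>i<n. fact i * fact (n - i) * f $ i * g $ (n - i)) = fact n * fps_conv f (fps_deriv g) $ n"
  proof (cases n)
    case (Suc m)
    have eq: "(\<Sum>i<n. fact i * fact (n - i) * f $ i * g $ (n - i)) =
          (\<Sum>i\<le>m. fact i * fact (m - i) * f $ i * (of_nat (m - i + 1) * g $ (m - i + 1)))"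
      unfolding Suc lessThan_Suc_atMost
      by (intro sum.cong refl) (auto simp: Suc_diff_le fact_Suc algebra_simps)
    show ?thesis unfolding eq by (simp add: Suc fps_conv_nth_Suc del: of_nat_Suc)
  qed simp
  finally show "fps_deriv (fps_conv f g) $ n = (fps_const (g $ 0) * f + fps_conv f (fps_deriv g)) $ n"
    by (simp add: add_divide_distrib)
qed

lemma fps_conv_mult_fps_exp: "fps_conv (f * fps_exp c) (g * fps_exp c) = fps_exp c * fps_conv f g"
proof -
  (* By fps_deriv_fps_conv, coefficient Suc n of the left side is determined by coefficient n of
     the same identity with fps_deriv g + c g in place of g, so induct on n with g generalised. *)
  have "\<forall>g. fps_conv (f * fps_exp c) (g * fps_exp c) $ n = (fps_exp c * fps_conv f g) $ n" for n
  proof (induction n)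
    case (Suc n)
    show ?case
    proof
      fix g
      define g' where "g' = fps_deriv g + fps_const c * g"
      have deriv_g: "fps_deriv (g * fps_exp c) = g' * fps_exp c"
        by (simp add: g'_def algebra_simps)
      have "of_nat (Suc n) * fps_conv (f * fps_exp c) (g * fps_exp c) $ Suc n
          = fps_deriv (fps_conv (f * fps_exp c) (g * fps_exp c)) $ n"
        by simp
      also have "\<dots> = g $ 0 * (f * fps_exp c) $ n + fps_conv (f * fps_exp c) (g' * fps_exp c) $ n"
        unfolding fps_deriv_fps_conv deriv_g by simp
      also have "\<dots> = (fps_const (g $ 0) * (f * fps_exp c) + fps_exp c * fps_conv f g') $ n"
        using Suc.IH by simp
      also have "fps_const (g $ 0) * (f * fps_exp c) + fps_exp c * fps_conv f g' =
                 fps_deriv (fps_exp c * fps_conv f g)"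
        unfolding g'_def fps_conv_add_right fps_conv_const_mult_right fps_deriv_fps_conv
        by (simp add: fps_deriv_fps_conv algebra_simps)
      also have "fps_deriv (fps_exp c * fps_conv f g) $ n = of_nat (Suc n) * (fps_exp c * fps_conv f g) $ Suc n"
        by (subst fps_deriv_nth) simp
      finally show "fps_conv (f * fps_exp c) (g * fps_exp c) $ Suc n = (fps_exp c * fps_conv f g) $ Suc n"
        by (simp del: of_nat_Suc)
    qed
  qed simp
  then show ?thesis
    by (intro fps_ext) blast
qed

lemma bernoulli_0 [simp]: "bernoulli 0 = 1"
  by (simp add: bernoulli.simps)

lemma bernoulli_bar_0 [simp]: "bernoulli_bar 0 = 1"
  by (simp add: bernoulli_bar_def)

lemma bernoulli_binomial_sum:
  assumes "n \<ge> 2"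
  shows "(\<Sum>k<n. real (n choose k) * bernoulli k) = 0"
proof -
  obtain m where n: "n = Suc m" and "m \<noteq> 0"
    using assms by (cases n) auto
  then have "real (Suc m) * bernoulli m = - (\<Sum>k<m. real (Suc m choose k) * bernoulli k)"
    by (subst bernoulli.simps) simp
  then show ?thesis
    by (simp add: n)
qed

lemma egf_bernoulli_mult_exp_minus_1: "egf bernoulli * (fps_exp 1 - 1) = fps_X"
proof (rule fps_ext)
  fix n
  have "(egf bernoulli * fps_exp 1) $ n = (\<Sum>k\<le>n. real (n choose k) * bernoulli k) / fact n"
    by (simp add: fps_exp_eq_egf egf_mult_nth)
  also have "\<dots> = (\<Sum>k<n. real (n choose k) * bernoulli k) / fact n + egf bernoulli $ n"
    by (simp add: lessThan_Suc_atMost[symmetric] add_divide_distrib)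
  finally have "(egf bernoulli * (fps_exp 1 - 1)) $ n = (\<Sum>k<n. real (n choose k) * bernoulli k) / fact n"
    by (simp add: algebra_simps)
  also have "\<dots> = fps_X $ n"
  proof -
    consider "n = 0" | "n = 1" | "n \<ge> 2" by linarith
    then show ?thesis
      by cases (simp_all add: fps_X_nth bernoulli_binomial_sum)
  qed
  finally show "(egf bernoulli * (fps_exp 1 - 1)) $ n = fps_X $ n" .
qed

lemma egf_bernoulli_bar_mult_exp_minus_1: "egf bernoulli_bar * (fps_exp 1 - 1) = fps_X * fps_exp (1/2)"
proof -
  define half where "half = egf bernoulli oo (fps_const (1/2) * fps_X)"
  have "bernoulli_bar n = 2 * ((1/2) ^ n * bernoulli n) - bernoulli n" for n
    by (simp add: bernoulli_bar_def field_simps power_one_over)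
  then have bar: "egf bernoulli_bar = fps_const 2 * half - egf bernoulli"
    by (intro fps_ext) (simp add: half_def fps_compose_linear diff_divide_distrib)
  have half: "half * (fps_exp (1/2) - 1) = fps_const (1/2) * fps_X"
    using arg_cong[OF egf_bernoulli_mult_exp_minus_1, of "\<lambda>f. f oo (fps_const (1/2) * fps_X)"]
    by (simp add: half_def fps_compose_mult_distrib fps_compose_sub_distrib)
  have "fps_exp 1 - 1 = (fps_exp (1/2) - 1) * (fps_exp (1/2) + (1 :: real fps))"
    by (simp add: algebra_simps fps_exp_add_mult[symmetric])
  then have "egf bernoulli_bar * (fps_exp 1 - 1) =
             fps_const 2 * (half * (fps_exp (1/2) - 1)) * (fps_exp (1/2) + 1) - egf bernoulli * (fps_exp 1 - 1)"
    unfolding bar by (simp add: algebra_simps)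
  also have "\<dots> = fps_X * fps_exp (1/2)"
    unfolding half egf_bernoulli_mult_exp_minus_1 by (simp add: algebra_simps fps_const_mult[symmetric])
  finally show ?thesis .
qed

lemma egf_bernoulli_bar: "egf bernoulli_bar = egf bernoulli * fps_exp (1/2)"
proof -
  have "egf bernoulli_bar * (fps_exp 1 - 1) = egf bernoulli * fps_exp (1/2) * (fps_exp 1 - 1)"
    using egf_bernoulli_bar_mult_exp_minus_1 egf_bernoulli_mult_exp_minus_1
    by (metis mult.assoc mult.commute)
  then show ?thesis
    by (simp add: mult_right_cancel)
qed

lemma egf_bernoulli_bar_reflect: "egf bernoulli_bar oo (fps_const (-1) * fps_X) = egf bernoulli_bar"
proof -
  define reflect :: "real fps \<Rightarrow> real fps" where "reflect f = f oo (fps_const (-1) * fps_X)" for f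
  have exp_1: "fps_exp (-1) * fps_exp 1 = (1 :: real fps)"
    and exp_half: "fps_exp (-(1/2)) * fps_exp 1 = (fps_exp (1/2) :: real fps)"
    by (simp_all add: fps_exp_add_mult[symmetric])
  have reflected: "reflect (egf bernoulli_bar) * (fps_exp (-1) - 1) = - (fps_X * fps_exp (-(1/2)))"
    using arg_cong[OF egf_bernoulli_bar_mult_exp_minus_1, of reflect]
    by (simp add: reflect_def fps_compose_mult_distrib fps_compose_sub_distrib fps_const_neg[symmetric])
  have "reflect (egf bernoulli_bar) * (fps_exp 1 - 1) =
        - (reflect (egf bernoulli_bar) * (fps_exp (-1) - 1) * fps_exp 1)"
    using exp_1 by (simp add: algebra_simps)
  also have "\<dots> = egf bernoulli_bar * (fps_exp 1 - 1)"
    unfolding reflected egf_bernoulli_bar_mult_exp_minus_1 using exp_half by (simp add: mult.assoc)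
  finally show ?thesis
    by (simp add: reflect_def mult_right_cancel)
qed

lemma bernoulli_bar_odd:
  assumes "odd n"
  shows "bernoulli_bar n = 0"
proof -
  have "(-1) ^ n * bernoulli_bar n = bernoulli_bar n"
    using arg_cong[OF egf_bernoulli_bar_reflect, of "\<lambda>f. f $ n"] by simp
  with assms show ?thesis
    by simp
qed

lemma fps_X_mult_fps_conv_egf_bernoulli_bar:
  "fps_X * fps_conv (egf bernoulli_bar) (egf bernoulli_bar) =
     (2 * fps_conv (egf bernoulli) fps_X + fps_conv fps_X fps_X) * egf bernoulli_bar"
proof -
  define C where "C = egf bernoulli_bar"
  define H :: "real fps" where "H = fps_exp (1/2)"
  define R where "R = 2 * fps_conv (egf bernoulli) fps_X + fps_conv fps_X fps_X"
  have C_mult: "C * (fps_exp 1 - 1) = fps_X * H"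
    by (simp add: C_def H_def egf_bernoulli_bar_mult_exp_minus_1)
  have conv_C_XH: "fps_conv C (fps_X * H) = H * fps_conv (egf bernoulli) fps_X"
    unfolding C_def H_def egf_bernoulli_bar by (rule fps_conv_mult_fps_exp)
  have "fps_exp 1 * fps_conv C C = fps_conv (C * fps_exp 1) (C * fps_exp 1)"
    by (simp add: fps_conv_mult_fps_exp)
  also have "C * fps_exp 1 = C + fps_X * H"
    using C_mult by (simp add: algebra_simps)
  also have "fps_conv (C + fps_X * H) (C + fps_X * H) =
      fps_conv C C + (fps_conv C (fps_X * H) + fps_conv (fps_X * H) C + fps_conv (fps_X * H) (fps_X * H))"
    by (simp add: fps_conv_add_left fps_conv_add_right add_ac)
  also note conv_C_XH
  also have "fps_conv (fps_X * H) C = H * fps_conv (egf bernoulli) fps_X"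
    by (subst fps_conv_commute) (rule conv_C_XH)
  also have "fps_conv (fps_X * H) (fps_X * H) = H * fps_conv fps_X fps_X"
    unfolding H_def by (rule fps_conv_mult_fps_exp)
  also have "H * fps_conv (egf bernoulli) fps_X + H * fps_conv (egf bernoulli) fps_X + H * fps_conv fps_X fps_X
      = H * R"
    unfolding R_def by (simp only: distrib_left mult_2)
  finally have "fps_conv C C * (fps_exp 1 - 1) = H * R"
    by (simp add: algebra_simps)
  then have "fps_X * fps_conv C C * (fps_exp 1 - 1) = fps_X * (H * R)"
    by (simp add: mult.assoc)
  also have "\<dots> = R * C * (fps_exp 1 - 1)"
    by (simp add: C_mult mult_ac)
  finally show ?thesis
    unfolding C_def R_def by (simp add: mult_right_cancel)
qed

lemma fps_conv_bernoulli_fps_X_nth_even: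
  "(2 * fps_conv (egf bernoulli) fps_X + fps_conv fps_X fps_X) $ (2 * k + 2) =
     2 * bernoulli (2 * k) / fact (2 * k + 2)"
  using fps_conv_egf_fps_X_nth[of bernoulli "2 * k"] fps_conv_fps_X_nth[of "fps_X :: real fps" "2 * k"]
  by (simp add: numeral_fps_const numeral_2_eq_2 fps_X_nth) presburger

lemma bernoulli_bar_convolution:
  "(\<Sum>k\<le>n. bernoulli_bar (2 * k) * bernoulli_bar (2 * n - 2 * k)) =
   1 / real (n + 1) * (\<Sum>k\<le>n. bernoulli (2 * k) * bernoulli_bar (2 * n - 2 * k) * real ((2 * n + 2) choose (2 * k + 2)))"
proof -
  define S where "S = (\<Sum>k\<le>n. bernoulli_bar (2 * k) * bernoulli_bar (2 * n - 2 * k))"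
  define T where "T = (\<Sum>k\<le>n. bernoulli (2 * k) * bernoulli_bar (2 * n - 2 * k) * real ((2 * n + 2) choose (2 * k + 2)))"
  define R where "R = 2 * fps_conv (egf bernoulli) fps_X + fps_conv fps_X fps_X"
  have R_0: "R $ 0 = 0"
    by (simp add: R_def numeral_fps_const)
  have "S / fact (2 * n + 1) = fps_conv (egf bernoulli_bar) (egf bernoulli_bar) $ Suc (2 * n)"
    unfolding S_def by (simp add: fps_conv_egf_nth_Suc sum_atMost_even_terms bernoulli_bar_odd)
  also have "\<dots> = (R * egf bernoulli_bar) $ (2 * (n + 1))"
    using arg_cong[OF fps_X_mult_fps_conv_egf_bernoulli_bar, of "\<lambda>f. f $ (2 * (n + 1))"]
    by (simp add: R_def)
  also have "\<dots> = (\<Sum>k\<le>n + 1. R $ (2 * k) * egf bernoulli_bar $ (2 * (n + 1) - 2 * k))"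
    unfolding fps_mult_nth atLeast0AtMost
    by (rule sum_atMost_even_terms) (simp add: bernoulli_bar_odd)
  also have "\<dots> = (\<Sum>k\<le>n. R $ (2 * k + 2) * egf bernoulli_bar $ (2 * n - 2 * k))"
    by (simp add: sum.atMost_Suc_shift R_0 del: sum.atMost_Suc)
  also have "\<dots> = T / (real (n + 1) * fact (2 * n + 1))"
    unfolding T_def sum_divide_distrib
  proof (intro sum.cong refl)
    fix k assume "k \<in> {..n}"
    then have "k \<le> n" by simp
    have "R $ (2 * k + 2) * egf bernoulli_bar $ (2 * n - 2 * k) =
          bernoulli (2 * k) * bernoulli_bar (2 * n - 2 * k) * (2 / (fact (2 * k + 2) * fact (2 * n - 2 * k)))"
      unfolding R_def fps_conv_bernoulli_fps_X_nth_even egf_nth by (simp add: field_simps)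
    also have "\<dots> = bernoulli (2 * k) * bernoulli_bar (2 * n - 2 * k) *
        (real ((2 * n + 2) choose (2 * k + 2)) / (real (n + 1) * fact (2 * n + 1)))"
      unfolding binomial_even_over_fact[OF \<open>k \<le> n\<close>] ..
    finally show "R $ (2 * k + 2) * egf bernoulli_bar $ (2 * n - 2 * k) =
      bernoulli (2 * k) * bernoulli_bar (2 * n - 2 * k) * real ((2 * n + 2) choose (2 * k + 2))
        / (real (n + 1) * fact (2 * n + 1))"
      by (simp only: times_divide_eq_right)
  qed
  finally have "S / fact (2 * n + 1) = T / (real (n + 1) * fact (2 * n + 1))" .
  then have "S = T / real (n + 1)"
    by (metis divide_cancel_right divide_divide_eq_left fact_nonzero mult.commute)
  then have "S = 1 / real (n + 1) * T"
    by simp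
  then show ?thesis
    unfolding S_def T_def .
qed

theorem mainTheorem8:
  fixes n :: nat
  assumes "n \<ge> 1"
  shows "(\<Sum>k=1..n. bernoulli_bar (2*k) * bernoulli_bar (2*n - 2*k)) =
         1 / real (n + 1) * (\<Sum>k=1..n. bernoulli (2*k) * bernoulli_bar (2*n - 2*k) * real ((2*n+2) choose (2*k+2)))
         + 2 * real n * bernoulli_bar (2*n)"
    (is "?L = 1 / real (n + 1) * ?T + _")
proof -
  have split_0: "(\<Sum>k\<le>n. f k) = f 0 + (\<Sum>k=1..n. f k)" for f :: "nat \<Rightarrow> real"
    by (simp add: atMost_atLeast0 sum.atLeast_Suc_atMost)
  have term_0: "bernoulli_bar (2 * 0) * bernoulli_bar (2 * n - 2 * 0) = bernoulli_bar (2 * n)"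
    "bernoulli (2 * 0) * bernoulli_bar (2 * n - 2 * 0) * real ((2 * n + 2) choose (2 * 0 + 2))
       = real (n + 1) * (2 * real n + 1) * bernoulli_bar (2 * n)"
    unfolding mult_0_right add_0 diff_zero choose_two_even by (simp_all add: algebra_simps)
  have "bernoulli_bar (2 * n) + ?L =
        1 / real (n + 1) * (real (n + 1) * (2 * real n + 1) * bernoulli_bar (2 * n) + ?T)"
    using bernoulli_bar_convolution[of n] unfolding split_0 term_0 .
  then show ?thesis
    by (simp add: field_simps del: binomial_Suc_Suc)
qed

end
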